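(* Let $n \ge 1$ and $1 \le m \le n$ be integers, and put $s_k = 8(n-k)$ and $M_k = 2^{k-1}(8n+16) - 16$ for $k \ge 1$. Consider Boolean variables $x_{(k,i)} \in \{0,1\}$ for $k \in \{1,\dots,m\}$ and $i \in \{1,2,3,4,5,6,A,B\}$ ($8m$ variables), and write an assignment as a bit string listing the variables in the order $(m,1),\dots,(m,6),(m,A),(m,B),(m-1,1),\dots,(m-1,B),\dots,(1,1),\dots,(1,B)$. For each $k$ define (writing $x_i$ for $x_{(k,i)}$) $$\begin{aligned} g_k(x) ={}& -(2M_k+13)x_1 - (M_k+5)x_2 - (M_k+3)x_3 - (M_k+s_k+7)x_4 - x_5 - (M_k+1)x_6 - (s_k+5)x_A - (s_k+3)x_B \\ &+ (M_k+6)x_1x_2 + (M_k+4)x_2x_3 + (M_k+2)x_3x_6 + (M_k+6)x_1x_4 + (M_k+4)x_4x_5 - (M_k+2)x_5x_6 \\ &+ (s_k+4)x_Ax_B - 2x_1x_B + (s_k+4)x_2x_B + (s_k+2)x_4x_A + (s_k+2)x_4x_B \\ &- (s_k+4)x_2x_Ax_B - (s_k+2)x_4x_Ax_B, \end{aligned}$$ and for $P \in \{0,1\}$ define the fitness function $$f^{P}(x) = \sum_{k=1}^{m} g_k(x) + \sum_{k=2}^{m} M_k\, x_{(k,6)}x_{(k-1,1)} + \sum_{k=1}^{m-1} s_k\, x_{(k,B)}x_{(k+1,A)} + 8n\, x_{(1,6)}x_{(1,A)} + P\,(2M_m+16)\,x_{(m,1)}.$$ Let $a = 0^{8m}$ and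 $b = 111110\,01\,0^{8(m-1)}$. Then: (1) in the fitness landscape of $f^{1}$ there is exactly one ascent starting from $a$, and it ends at the local peak $b$; (2) in the fitness landscape of $f^{0}$ there is exactly one ascent starting from $b$, and it ends at the local peak $a$. Both ascents have length $T_m = 10(2^m - 1)$.
   Context: Two assignments in $\{0,1\}^{8m}$ are adjacent if they differ in exactly one variable. For a fitness function $f$, an assignment $x^*$ is a local peak if $f(y) \le f(x^* )$ for every assignment $y$ adjacent to $x^*$. An ascent from $x^0$ is a sequence $x^0, x^1, \dots, x^T$ of assignments such that $x^{t}$ and $x^{t+1}$ are adjacent and $f(x^{t+1}) > f(x^t)$ for each $t$, and $x^T$ is a local peak; its length is $T$. The fitness landscape of $f$ is $f$ together with this adjacency structure. *)

theory Defs
  imports Main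
begin

(* Assignments in {0,1}^N are bool lists of length N (True = 1). *)

definition adjacent :: "bool list \<Rightarrow> bool list \<Rightarrow> bool" where
  "adjacent x y \<longleftrightarrow> length x = length y \<and>
     card {i. i < length x \<and> x ! i \<noteq> y ! i} = 1"

definition local_peak :: "nat \<Rightarrow> (bool list \<Rightarrow> int) \<Rightarrow> bool list \<Rightarrow> bool" where
  "local_peak N f x \<longleftrightarrow> length x = N \<and>
     (\<forall>y. length y = N \<longrightarrow> adjacent x y \<longrightarrow> f y \<le> f x)"

(* An ascent x^0,...,x^T is represented by the nonempty list [x^0,...,x^T];
   its length T is  length p - 1. *)
definition is_ascent :: "nat \<Rightarrow> (bool list \<Rightarrow> int) \<Rightarrow> bool list list \<Rightarrow> bool" where
  "is_ascent N f p \<longleftrightarrow> p \<noteq> [] \<and> (\<forall>x\<in>set p. length x = N) \<and>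
     (\<forall>t. Suc t < length p \<longrightarrow> adjacent (p ! t) (p ! Suc t) \<and> f (p ! Suc t) > f (p ! t)) \<and>
     local_peak N f (last p)"

definition s_par :: "nat \<Rightarrow> nat \<Rightarrow> int" where
  "s_par n k = 8 * (int n - int k)"

definition M_par :: "nat \<Rightarrow> nat \<Rightarrow> int" where
  "M_par n k = 2 ^ (k - 1) * (8 * int n + 16) - 16"

(* variable x_(k,i), i = 0..7 standing for 1,2,3,4,5,6,A,B; positions in the bit string
   are ordered (m,1),...,(m,B),(m-1,1),...,(1,B). *)
definition xv :: "nat \<Rightarrow> bool list \<Rightarrow> nat \<Rightarrow> nat \<Rightarrow> int" where
  "xv m x k i = (if x ! (8 * (m - k) + i) then 1 else 0)"

definition g_blk :: "nat \<Rightarrow> nat \<Rightarrow> bool list \<Rightarrow> nat \<Rightarrow> int" where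
  "g_blk n m x k =
    (let M = M_par n k; s = s_par n k;
         x1 = xv m x k 0; x2 = xv m x k 1; x3 = xv m x k 2; x4 = xv m x k 3;
         x5 = xv m x k 4; x6 = xv m x k 5; xA = xv m x k 6; xB = xv m x k 7
     in - (2*M + 13) * x1 - (M + 5) * x2 - (M + 3) * x3 - (M + s + 7) * x4 - x5
        - (M + 1) * x6 - (s + 5) * xA - (s + 3) * xB
        + (M + 6) * x1 * x2 + (M + 4) * x2 * x3 + (M + 2) * x3 * x6
        + (M + 6) * x1 * x4 + (M + 4) * x4 * x5 - (M + 2) * x5 * x6
        + (s + 4) * xA * xB - 2 * x1 * xB + (s + 4) * x2 * xB
        + (s + 2) * x4 * xA + (s + 2) * x4 * xB
        - (s + 4) * x2 * xA * xB - (s + 2) * x4 * xA * xB)"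

definition fitness :: "nat \<Rightarrow> nat \<Rightarrow> int \<Rightarrow> bool list \<Rightarrow> int" where
  "fitness n m P x =
     (\<Sum>k=1..m. g_blk n m x k)
     + (\<Sum>k=2..m. M_par n k * xv m x k 5 * xv m x (k - 1) 0)
     + (\<Sum>k=1..m-1. s_par n k * xv m x k 7 * xv m x (k + 1) 6)
     + 8 * int n * xv m x 1 5 * xv m x 1 6
     + P * (2 * M_par n m + 16) * xv m x m 0"

end

theory Submission
  imports Defs
begin

(*
  Only neighbouring blocks interact, so after charging the couplings to the lower block the
  fitness of blocks k, ..., 1 depends on the blocks above only through the two bits
  x_(k+1,6) and x_(k+1,A) (tail_fit). Conversely, the lower blocks influence which flips of
  block k+1 improve the fitness only through x_(k,1) and x_(k,B). An ascent is forced if each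
  step is the only improving flip; then it is the unique ascent from its first point.

  The forced ascent on k+1 blocks is built by induction: the top block makes a few moves,
  then rests with x_6 = 1, x_A = 0 while the lower blocks run the whole forced ascent
  0 -> b, makes a few more moves, rests with x_6 = 0, x_A = 1 while the lower blocks run the
  whole forced ascent b -> 0, and finishes. Along each lower ascent x_(k,B) only changes in
  the last step, so the top block sees a constant environment, and since s_k + 8 <= M_k all
  checks on the top block are finitely many inequalities in M_k and s_k. The lengths obey
  T_(k+1) = 2 T_k + 10.
*)

section \<open>Ascents in the hypercube\<close>

definition flip :: "bool list \<Rightarrow> nat \<Rightarrow> bool list" where
  "flip x i = x[i := \<not> x ! i]"

lemma length_flip [simp]: "length (flip x i) = length x"
  by (simp add: flip_def)

lemma flip_append:
  "flip (t @ x) i = (if i < length t then flip t i @ x else t @ flip x (i - length t))"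
  by (simp add: flip_def list_update_append nth_append)

lemma adjacent_iff_flip: "adjacent x y \<longleftrightarrow> (\<exists>i<length x. y = flip x i)"
proof
  assume "adjacent x y"
  then have len: "length y = length x" and "card {i. i < length x \<and> x ! i \<noteq> y ! i} = 1"
    by (auto simp: adjacent_def)
  then obtain i where i: "{j. j < length x \<and> x ! j \<noteq> y ! j} = {i}"
    by (auto simp: card_1_singleton_iff)
  have "y = flip x i"
  proof (rule nth_equalityI)
    fix j assume "j < length y"
    then show "y ! j = flip x i ! j"
      using i len by (cases "j = i") (auto simp: flip_def nth_list_update)
  qed (simp add: len)
  with i show "\<exists>i<length x. y = flip x i" by auto
next
  assume "\<exists>i<length x. y = flip x i"
  then obtain i where "i < length x" "y = flip x i" by blast
  then have "{j. j < length x \<and> x ! j \<noteq> y ! j} = {i}"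
    by (auto simp: flip_def nth_list_update)
  then show "adjacent x y"
    using \<open>y = flip x i\<close> by (simp add: adjacent_def)
qed

lemma adjacent_length: "adjacent x y \<Longrightarrow> length y = length x"
  by (simp add: adjacent_def)

lemma local_peak_iff_flip:
  "local_peak N f x \<longleftrightarrow> length x = N \<and> (\<forall>i<N. f (flip x i) \<le> f x)"
  unfolding local_peak_def adjacent_iff_flip by (metis length_flip)

definition sole_ascent_step :: "nat \<Rightarrow> (bool list \<Rightarrow> int) \<Rightarrow> bool list \<Rightarrow> bool list \<Rightarrow> bool" where
  "sole_ascent_step N f x y \<longleftrightarrow> length x = N \<and> adjacent x y \<and> f x < f y \<and>
     (\<forall>z. adjacent x z \<longrightarrow> f x < f z \<longrightarrow> z = y)"

lemma sole_ascent_step_iff_flip: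
  "sole_ascent_step N f x y \<longleftrightarrow> length x = N \<and> (\<exists>i<N. y = flip x i) \<and> f x < f y \<and>
     (\<forall>i<N. flip x i \<noteq> y \<longrightarrow> f (flip x i) \<le> f x)"
proof -
  have "(\<forall>z. adjacent x z \<longrightarrow> f x < f z \<longrightarrow> z = y) \<longleftrightarrow>
        (\<forall>i<length x. flip x i \<noteq> y \<longrightarrow> f (flip x i) \<le> f x)"
    unfolding adjacent_iff_flip not_le[symmetric] by blast
  then show ?thesis
    unfolding sole_ascent_step_def by (simp only: adjacent_iff_flip) blast
qed

lemma is_ascent_iff_successively:
  "is_ascent N f p \<longleftrightarrow> p \<noteq> [] \<and> (\<forall>x\<in>set p. length x = N) \<and>
     successively (\<lambda>x y. adjacent x y \<and> f x < f y) p \<and> local_peak N f (last p)"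
  by (simp add: is_ascent_def successively_conv_nth)

lemma is_ascent_singleton: "is_ascent N f [x] \<longleftrightarrow> local_peak N f x"
  by (simp add: is_ascent_iff_successively local_peak_def)

lemma is_ascent_Cons_Cons:
  "is_ascent N f (x # y # p) \<longleftrightarrow>
     length x = N \<and> adjacent x y \<and> f x < f y \<and> is_ascent N f (y # p)"
  by (auto simp: is_ascent_iff_successively)

lemma is_ascent_cong:
  assumes "\<And>x. length x = N \<Longrightarrow> f x = g x"
  shows "is_ascent N f p \<longleftrightarrow> is_ascent N g p"
proof -
  have "local_peak N f x \<longleftrightarrow> local_peak N g x" for x
    using assms by (auto simp: local_peak_iff_flip)
  moreover have "successively (\<lambda>x y. adjacent x y \<and> f x < f y) p \<longleftrightarrow>
                 successively (\<lambda>x y. adjacent x y \<and> g x < g y) p"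
    if "\<forall>x\<in>set p. length x = N"
    using that assms by (intro successively_cong) auto
  ultimately show ?thesis
    by (auto simp: is_ascent_iff_successively)
qed

lemma local_peak_not_ascending:
  "local_peak N f x \<Longrightarrow> adjacent x y \<Longrightarrow> f x < f y \<Longrightarrow> False"
  unfolding local_peak_def using adjacent_length by (metis not_le)

definition forced_ascent :: "nat \<Rightarrow> (bool list \<Rightarrow> int) \<Rightarrow> bool list list \<Rightarrow> bool" where
  "forced_ascent N f xs \<longleftrightarrow>
     xs \<noteq> [] \<and> successively (sole_ascent_step N f) xs \<and> local_peak N f (last xs)"

lemma forced_ascent_is_ascent: "forced_ascent N f xs \<Longrightarrow> is_ascent N f xs"
  unfolding forced_ascent_def
proof (induction xs rule: induct_list012)
  case (3 x y zs)
  then show ?case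
    by (auto simp: is_ascent_Cons_Cons sole_ascent_step_def)
qed (simp_all add: is_ascent_singleton)

lemma forced_ascent_unique:
  "forced_ascent N f xs \<Longrightarrow> is_ascent N f p \<Longrightarrow> hd p = hd xs \<Longrightarrow> p = xs"
  unfolding forced_ascent_def
proof (induction xs arbitrary: p rule: induct_list012)
  case (2 x)
  then obtain p' where p: "p = x # p'"
    by (cases p) (auto simp: is_ascent_def)
  have "p' = []"
  proof (rule ccontr)
    assume "p' \<noteq> []"
    then obtain y p'' where "p' = y # p''"
      by (cases p') auto
    with "2.prems"(2) p have "adjacent x y" "f x < f y"
      by (simp_all add: is_ascent_Cons_Cons)
    with "2.prems"(1) show False
      by (auto dest: local_peak_not_ascending)
  qed
  with p show ?case by simp
next
  case (3 x y zs)
  then have step: "adjacent x y" "f x < f y" "\<And>z. adjacent x z \<Longrightarrow> f x < f z \<Longrightarrow> z = y"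
    by (simp_all add: sole_ascent_step_def)
  obtain p' where p: "p = x # p'"
    using "3.prems" by (cases p) (auto simp: is_ascent_def)
  obtain y' p'' where p': "p' = y' # p''"
  proof (cases p')
    case Nil
    then have "local_peak N f x"
      using "3.prems" p by (simp add: is_ascent_singleton)
    with step show ?thesis
      by (blast dest: local_peak_not_ascending)
  qed
  with "3.prems" p have "adjacent x y'" "f x < f y'" "is_ascent N f (y' # p'')"
    by (simp_all add: is_ascent_Cons_Cons)
  with step have "y' = y"
    by blast
  with "3.IH"(2)[of p'] "3.prems" \<open>is_ascent N f (y' # p'')\<close> p p' show ?case
    by simp
qed simp

lemma forced_ascent_unique_iff:
  assumes "forced_ascent N f xs"
  shows "is_ascent N f p \<and> hd p = hd xs \<longleftrightarrow> p = xs"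
  using assms forced_ascent_is_ascent forced_ascent_unique by blast

lemma successively_mono_butlast:
  assumes "successively P xs" "\<And>x y. x \<in> set (butlast xs) \<Longrightarrow> P x y \<Longrightarrow> Q x y"
  shows "successively Q xs"
  using assms by (induction P xs rule: successively.induct) auto

lemma local_peak_cong_shift:
  assumes "\<And>z. length z = N \<Longrightarrow> g z = f z + c"
  shows "local_peak N g x \<longleftrightarrow> local_peak N f x"
  using assms by (auto simp: local_peak_iff_flip)

lemma sole_ascent_step_cong_shift:
  assumes "\<And>z. length z = N \<Longrightarrow> g z = f z + c"
  shows "sole_ascent_step N g x y \<longleftrightarrow> sole_ascent_step N f x y"
  using assms by (auto simp: sole_ascent_step_iff_flip)

lemma local_peak_append:
  assumes "local_peak L (\<lambda>u. f (u @ x)) t" "local_peak K (\<lambda>z. f (t @ z)) x"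
  shows "local_peak (L + K) f (t @ x)"
  using assms by (auto simp: local_peak_iff_flip flip_append)

lemma sole_ascent_step_in_suffix:
  assumes "local_peak L (\<lambda>u. f (u @ x)) t" "sole_ascent_step K (\<lambda>z. f (t @ z)) x y"
  shows "sole_ascent_step (L + K) f (t @ x) (t @ y)"
  unfolding sole_ascent_step_iff_flip
proof (intro conjI allI impI)
  show "length (t @ x) = L + K" "f (t @ x) < f (t @ y)"
    using assms by (auto simp: local_peak_def sole_ascent_step_def)
  obtain j where "j < K" "y = flip x j"
    using assms(2) by (auto simp: sole_ascent_step_iff_flip)
  then show "\<exists>i<L + K. t @ y = flip (t @ x) i"
    using assms(1) by (intro exI[of _ "L + j"]) (auto simp: local_peak_def flip_append)
  fix i assume "i < L + K" "flip (t @ x) i \<noteq> t @ y"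
  then show "f (flip (t @ x) i) \<le> f (t @ x)"
    using assms by (auto simp: local_peak_iff_flip sole_ascent_step_iff_flip flip_append)
qed

lemma sole_ascent_step_in_prefix:
  assumes "sole_ascent_step L (\<lambda>u. f (u @ x)) t u" "local_peak K (\<lambda>z. f (t @ z)) x"
  shows "sole_ascent_step (L + K) f (t @ x) (u @ x)"
  unfolding sole_ascent_step_iff_flip
proof (intro conjI allI impI)
  show "length (t @ x) = L + K" "f (t @ x) < f (u @ x)"
    using assms by (auto simp: local_peak_def sole_ascent_step_def)
  obtain j where "j < L" "u = flip t j"
    using assms(1) by (auto simp: sole_ascent_step_iff_flip)
  then show "\<exists>i<L + K. u @ x = flip (t @ x) i"
    using assms(1) by (intro exI[of _ j]) (auto simp: sole_ascent_step_def flip_append)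
  fix i assume "i < L + K" "flip (t @ x) i \<noteq> u @ x"
  then show "f (flip (t @ x) i) \<le> f (t @ x)"
    using assms by (auto simp: local_peak_iff_flip sole_ascent_step_iff_flip flip_append)
qed

lemma forced_path_in_suffix:
  assumes "successively (sole_ascent_step K (\<lambda>z. f (t @ z))) xs"
    and "\<forall>x\<in>set (butlast xs). local_peak L (\<lambda>u. f (u @ x)) t"
  shows "successively (sole_ascent_step (L + K) f) (map ((@) t) xs)"
  unfolding successively_map using assms
  by (auto elim!: successively_mono_butlast intro: sole_ascent_step_in_suffix)

lemma forced_path_in_prefix:
  assumes "successively (sole_ascent_step L (\<lambda>u. f (u @ x))) ts"
    and "\<forall>t\<in>set (butlast ts). local_peak K (\<lambda>z. f (t @ z)) x"
  shows "successively (sole_ascent_step (L + K) f) (map (\<lambda>t. t @ x) ts)"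
  unfolding successively_map using assms
  by (auto elim!: successively_mono_butlast intro: sole_ascent_step_in_prefix)

section \<open>Decomposition of the fitness into blocks\<close>

(* M = M_k, s = s_k, P = x_(k+1,6), Q = x_(k+1,A). The couplings M_(k+1) x_(k+1,6) x_(k,1)
   (note M_(k+1) = 2 M_k + 16) and s_k x_(k,B) x_(k+1,A) to the block above are charged to
   block k; for k = m the P-term of fitness is exactly this coupling. *)
definition block_fit :: "int \<Rightarrow> int \<Rightarrow> int \<Rightarrow> int \<Rightarrow> bool list \<Rightarrow> int" where
  "block_fit M s P Q t =
    (let x1 = of_bool (t ! 0); x2 = of_bool (t ! 1); x3 = of_bool (t ! 2); x4 = of_bool (t ! 3);
         x5 = of_bool (t ! 4); x6 = of_bool (t ! 5); xA = of_bool (t ! 6); xB = of_bool (t ! 7)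
     in - (2*M + 13) * x1 - (M + 5) * x2 - (M + 3) * x3 - (M + s + 7) * x4 - x5
        - (M + 1) * x6 - (s + 5) * xA - (s + 3) * xB
        + (M + 6) * x1 * x2 + (M + 4) * x2 * x3 + (M + 2) * x3 * x6
        + (M + 6) * x1 * x4 + (M + 4) * x4 * x5 - (M + 2) * x5 * x6
        + (s + 4) * xA * xB - 2 * x1 * xB + (s + 4) * x2 * xB
        + (s + 2) * x4 * xA + (s + 2) * x4 * xB
        - (s + 4) * x2 * xA * xB - (s + 2) * x4 * xA * xB
        + P * (2 * M + 16) * x1 + Q * s * xB)"

lemma block_fit_append: "length t = 8 \<Longrightarrow> block_fit M s P Q (t @ u) = block_fit M s P Q t"
  by (simp add: block_fit_def nth_append)

lemma block_fit_boundary: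
  "block_fit M s P Q t =
     block_fit M s 0 0 t + P * (2 * M + 16) * of_bool (t ! 0) + Q * s * of_bool (t ! 7)"
  by (simp add: block_fit_def Let_def algebra_simps)

lemma M_par_Suc: "M_par n (Suc (Suc k)) = 2 * M_par n (Suc k) + 16"
  by (simp add: M_par_def algebra_simps)

lemma s_par_Suc: "s_par n k = s_par n (Suc k) + 8"
  by (simp add: s_par_def algebra_simps)

(* Fitness of blocks k, ..., 1 given P = x_(k+1,6) and Q = x_(k+1,A); the base case is the
   term 8n x_(1,6) x_(1,A). *)
primrec tail_fit :: "nat \<Rightarrow> nat \<Rightarrow> int \<Rightarrow> int \<Rightarrow> bool list \<Rightarrow> int" where
  "tail_fit n 0 P Q x = 8 * int n * P * Q"
| "tail_fit n (Suc k) P Q x =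
     block_fit (M_par n (Suc k)) (s_par n (Suc k)) P Q x
     + tail_fit n k (of_bool (x ! 5)) (of_bool (x ! 6)) (drop 8 x)"

lemma tail_fit_Suc_append:
  "length t = 8 \<Longrightarrow> tail_fit n (Suc k) P Q (t @ x) =
     block_fit (M_par n (Suc k)) (s_par n (Suc k)) P Q t
     + tail_fit n k (of_bool (t ! 5)) (of_bool (t ! 6)) x"
  by (simp add: block_fit_append nth_append)

declare tail_fit.simps(2) [simp del]

lemma tail_fit_Suc_boundary:
  "tail_fit n (Suc k) P Q x =
     tail_fit n (Suc k) 0 0 x + P * M_par n (Suc (Suc k)) * of_bool (x ! 0)
     + Q * s_par n (Suc k) * of_bool (x ! 7)"
  by (simp add: tail_fit.simps(2) block_fit_boundary[of _ _ P Q] M_par_Suc)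

lemma xv_top: "xv m x m i = of_bool (x ! i)"
  by (simp add: xv_def)

lemma xv_drop: "8 \<le> length x \<Longrightarrow> k \<le> m \<Longrightarrow> xv m (drop 8 x) k i = xv (Suc m) x k i"
  by (simp add: xv_def Suc_diff_le algebra_simps)

lemma block_fit_eq_g_blk:
  "block_fit (M_par n m) (s_par n m) P Q x =
     g_blk n m x m + P * (2 * M_par n m + 16) * of_bool (x ! 0) + Q * s_par n m * of_bool (x ! 7)"
  by (simp add: g_blk_def block_fit_def xv_top Let_def algebra_simps)

lemma fitness_boundary: "fitness n m P x = fitness n m 0 x + P * (2 * M_par n m + 16) * xv m x m 0"
  by (simp add: fitness_def)

lemma fitness_Suc_Suc:
  assumes "8 \<le> length x"
  shows "fitness n (Suc (Suc m)) 0 x =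
     g_blk n (Suc (Suc m)) x (Suc (Suc m)) + fitness n (Suc m) 0 (drop 8 x)
     + M_par n (Suc (Suc m)) * of_bool (x ! 5) * xv (Suc (Suc m)) x (Suc m) 0
     + s_par n (Suc m) * xv (Suc (Suc m)) x (Suc m) 7 * of_bool (x ! 6)"
proof -
  let ?m = "Suc (Suc m)"
  have "(\<Sum>k=1..Suc m. g_blk n (Suc m) (drop 8 x) k) = (\<Sum>k=1..Suc m. g_blk n ?m x k)"
    using assms by (intro sum.cong) (simp_all add: g_blk_def xv_drop)
  moreover have
    "(\<Sum>k=2..Suc m. M_par n k * xv (Suc m) (drop 8 x) k 5 * xv (Suc m) (drop 8 x) (k - 1) 0)
      = (\<Sum>k=2..Suc m. M_par n k * xv ?m x k 5 * xv ?m x (k - 1) 0)"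
    using assms by (intro sum.cong) (auto simp: xv_drop)
  moreover have
    "(\<Sum>k=1..m. s_par n k * xv (Suc m) (drop 8 x) k 7 * xv (Suc m) (drop 8 x) (k + 1) 6)
      = (\<Sum>k=1..m. s_par n k * xv ?m x k 7 * xv ?m x (k + 1) 6)"
    using assms by (intro sum.cong) (simp_all add: xv_drop)
  ultimately show ?thesis
    using assms by (simp add: fitness_def xv_drop xv_top)
qed

lemma tail_fit_eq_fitness:
  "length x = 8 * Suc m \<Longrightarrow>
     tail_fit n (Suc m) P Q x = fitness n (Suc m) P x + Q * s_par n (Suc m) * of_bool (x ! 7)"
proof (induction m arbitrary: x P Q)
  case 0
  then show ?case
    by (simp add: tail_fit.simps(2) block_fit_eq_g_blk fitness_def xv_top algebra_simps)
next
  case (Suc m)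
  let ?x6 = "of_bool (x ! 5)" and ?xA = "of_bool (x ! 6)"
  have len: "8 \<le> length x" "length (drop 8 x) = 8 * Suc m"
    using Suc.prems by simp_all
  have lower: "tail_fit n (Suc m) ?x6 ?xA (drop 8 x) =
      fitness n (Suc m) 0 (drop 8 x) + ?x6 * M_par n (Suc (Suc m)) * xv (Suc (Suc m)) x (Suc m) 0
      + ?xA * s_par n (Suc m) * xv (Suc (Suc m)) x (Suc m) 7"
    using len
    by (simp add: Suc.IH fitness_boundary[of n "Suc m" "of_bool (x ! 5)"] xv_def M_par_Suc)
  show ?case
    using len
    by (simp add: tail_fit.simps(2)[of n "Suc m"] lower block_fit_eq_g_blk fitness_Suc_Suc
        fitness_boundary[of n "Suc (Suc m)" P] xv_top algebra_simps)
qed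

lemma fitness_eq_tail_fit: "1 \<le> m \<Longrightarrow> length x = 8 * m \<Longrightarrow> fitness n m P x = tail_fit n m P 0 x"
  by (cases m) (simp_all add: tail_fit_eq_fitness)

section \<open>The top block\<close>

(* d1 = x_(k,1) and dB = x_(k,B) of the block below; s + 8 = s_k when s = s_(k+1). *)
definition top_fit :: "int \<Rightarrow> int \<Rightarrow> int \<Rightarrow> int \<Rightarrow> int \<Rightarrow> int \<Rightarrow> bool list \<Rightarrow> int" where
  "top_fit M s P Q d1 dB t =
     block_fit M s P Q t + M * of_bool (t ! 5) * d1 + (s + 8) * of_bool (t ! 6) * dB"

(* For k = 0 the term 8n x_(1,6) x_(1,A) plays the role of the coupling to the block below. *)
definition top_fit_over :: "nat \<Rightarrow> nat \<Rightarrow> int \<Rightarrow> int \<Rightarrow> bool list \<Rightarrow> bool list \<Rightarrow> int" where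
  "top_fit_over n k P Q x =
     (if k = 0 then (\<lambda>t. top_fit (M_par n 1) (s_par n 1) P Q 0 (of_bool (t ! 5)) t)
      else top_fit (M_par n (Suc k)) (s_par n (Suc k)) P Q (of_bool (x ! 0)) (of_bool (x ! 7)))"

lemma tail_fit_Suc_append_top:
  assumes "length t = 8"
  shows "tail_fit n (Suc k) P Q (t @ x) = top_fit_over n k P Q x t + tail_fit n k 0 0 x"
proof (cases k)
  case 0
  then show ?thesis
    using assms by (simp add: tail_fit_Suc_append top_fit_over_def top_fit_def s_par_def)
next
  case (Suc j)
  then show ?thesis
    using assms s_par_Suc[of n k]
    by (simp add: tail_fit_Suc_append tail_fit_Suc_boundary[of _ j "of_bool (t ! 5)"]
        top_fit_over_def top_fit_def algebra_simps)
qed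

lemma tail_fit_restrict_top:
  shows "sole_ascent_step 8 (\<lambda>u. tail_fit n (Suc k) P Q (u @ x)) t u \<longleftrightarrow>
           sole_ascent_step 8 (top_fit_over n k P Q x) t u"
    and "local_peak 8 (\<lambda>u. tail_fit n (Suc k) P Q (u @ x)) t \<longleftrightarrow>
           local_peak 8 (top_fit_over n k P Q x) t"
  by (auto intro!: sole_ascent_step_cong_shift local_peak_cong_shift
      simp: tail_fit_Suc_append_top)

lemma tail_fit_restrict_lower:
  assumes "length t = 8"
  shows "sole_ascent_step K (\<lambda>z. tail_fit n (Suc k) P Q (t @ z)) x y \<longleftrightarrow>
           sole_ascent_step K (tail_fit n k (of_bool (t ! 5)) (of_bool (t ! 6))) x y"
    and "local_peak K (\<lambda>z. tail_fit n (Suc k) P Q (t @ z)) x \<longleftrightarrow>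
           local_peak K (tail_fit n k (of_bool (t ! 5)) (of_bool (t ! 6))) x"
  using assms by (auto intro!: sole_ascent_step_cong_shift local_peak_cong_shift
      simp: tail_fit_Suc_append add.commute)

lemma tail_fit_local_peak_Suc:
  assumes "local_peak 8 (top_fit_over n k P Q x) t"
    and "local_peak (8 * k) (tail_fit n k (of_bool (t ! 5)) (of_bool (t ! 6))) x"
  shows "local_peak (8 * Suc k) (tail_fit n (Suc k) P Q) (t @ x)"
proof -
  have "length t = 8"
    using assms(1) by (simp add: local_peak_def)
  then show ?thesis
    using local_peak_append[of 8 "tail_fit n (Suc k) P Q" x t "8 * k"] assms
    by (simp add: tail_fit_restrict_top tail_fit_restrict_lower)
qed

lemma tail_fit_forced_path_top:
  assumes "\<forall>t\<in>set ts. length t = 8"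
    and "successively (sole_ascent_step 8 (top_fit_over n k P Q x)) ts"
    and "\<forall>t\<in>set (butlast ts).
           local_peak (8 * k) (tail_fit n k (of_bool (t ! 5)) (of_bool (t ! 6))) x"
  shows "successively (sole_ascent_step (8 * Suc k) (tail_fit n (Suc k) P Q)) (map (\<lambda>t. t @ x) ts)"
  using forced_path_in_prefix[where L = 8 and K = "8 * k" and f = "tail_fit n (Suc k) P Q"] assms
  by (simp add: tail_fit_restrict_top tail_fit_restrict_lower in_set_butlastD)

lemma tail_fit_forced_path_lower:
  assumes "length t = 8"
    and "successively
           (sole_ascent_step (8 * k) (tail_fit n k (of_bool (t ! 5)) (of_bool (t ! 6)))) xs"
    and "\<forall>x\<in>set (butlast xs). local_peak 8 (top_fit_over n k P Q x) t"
  shows "successively (sole_ascent_step (8 * Suc k) (tail_fit n (Suc k) P Q)) (map ((@) t) xs)"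
  using forced_path_in_suffix[where L = 8 and K = "8 * k" and f = "tail_fit n (Suc k) P Q"] assms
  by (simp add: tail_fit_restrict_top tail_fit_restrict_lower)

(* The strings list x_1, ..., x_6, x_A, x_B of the top block; up selects the ascent
   0 -> b (True) or b -> 0 (False). *)
definition bits :: "char list \<Rightarrow> bool list" where
  "bits cs = map (\<lambda>c. c = CHR ''1'') cs"

definition top_before :: "bool \<Rightarrow> bool list list" where
  "top_before up = map bits
     (if up then [''00000000'', ''10000000'', ''11000000'', ''11100000'']
      else [''11111001'', ''01111001'', ''01101001'', ''01100001''])"

definition top_pivot1 :: "bool \<Rightarrow> bool list" where
  "top_pivot1 up = bits (if up then ''11100100'' else ''01100101'')"

definition top_between :: "bool \<Rightarrow> bool list list" where
  "top_between up = map bits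
     (if up then [''11100110'', ''11110110'', ''11111110'']
      else [''01100111'', ''00100111'', ''00000111''])"

definition top_pivot2 :: "bool \<Rightarrow> bool list" where
  "top_pivot2 up = bits (if up then ''11111010'' else ''00000011'')"

definition top_after :: "bool \<Rightarrow> bool list list" where
  "top_after up = map bits
     (if up then [''11111000'', ''11111001''] else [''00000001'', ''00000000''])"

(* The bits (x_(k+1,6), x_(k+1,A)) above the ascents 0 -> b and b -> 0: (P, 0) at the top, and
   the resting top block supplies (1, 0) and (0, 1) in the induction. *)
definition boundary_ok :: "bool \<Rightarrow> int \<Rightarrow> int \<Rightarrow> bool" where
  "boundary_ok up P Q \<longleftrightarrow>
     up \<and> P = 1 \<and> Q = 0 \<or> \<not> up \<and> P = 0 \<and> Q = 0 \<or> \<not> up \<and> P = 0 \<and> Q = 1"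

lemma all_less_8: "(\<forall>i<8. P i) \<longleftrightarrow> P 0 \<and> P 1 \<and> P 2 \<and> P 3 \<and> P 4 \<and> P 5 \<and> P 6 \<and> P (7::nat)"
  by (simp add: All_less_Suc eval_nat_numeral conj_ac)

lemma ex_less_8: "(\<exists>i<8. P i) \<longleftrightarrow> P 0 \<or> P 1 \<or> P 2 \<or> P 3 \<or> P 4 \<or> P 5 \<or> P 6 \<or> P (7::nat)"
  by (simp add: Ex_less_Suc eval_nat_numeral disj_ac)

lemmas block_eval =
  sole_ascent_step_iff_flip local_peak_iff_flip all_less_8 ex_less_8 flip_def
  top_fit_def block_fit_def Let_def bits_def
  top_before_def top_pivot1_def top_between_def top_pivot2_def top_after_def

lemma top_walks_with_lower_zeros:
  assumes "0 \<le> s" "s + 8 \<le> M" "boundary_ok up P Q"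
    and "E = top_fit M s P Q 0 0 \<or> E = (\<lambda>t. top_fit M s P Q 0 (of_bool (t ! 5)) t)"
  shows "successively (sole_ascent_step 8 E) (top_before up @ [top_pivot1 up])"
    and "successively (sole_ascent_step 8 E) (top_pivot2 up # top_after up)"
    and "local_peak 8 E (last (top_after up))"
  using assms(3,4) unfolding boundary_ok_def
  by (elim disjE conjE; simp add: block_eval; use assms(1,2) in linarith)+

lemma top_walk_with_lower_peak:
  assumes "0 \<le> s" "s + 8 \<le> M" "boundary_ok up P Q"
    and "E = top_fit M s P Q 1 1 \<or> E = (\<lambda>t. top_fit M s P Q 0 (of_bool (t ! 5)) t)"
  shows "successively (sole_ascent_step 8 E) (top_pivot1 up # top_between up @ [top_pivot2 up])"
  using assms(3,4) unfolding boundary_ok_def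
  by (elim disjE conjE; simp add: block_eval; use assms(1,2) in linarith)+

lemma top_pivots_local_peak:
  assumes "0 \<le> s" "s + 8 \<le> M" "boundary_ok up P Q" "d1 = 0 \<or> d1 = 1"
  shows "local_peak 8 (top_fit M s P Q d1 0) (top_pivot1 up)"
    and "local_peak 8 (top_fit M s P Q d1 1) (top_pivot2 up)"
  using assms(3,4) unfolding boundary_ok_def
  by (elim disjE conjE; simp add: block_eval; use assms(1,2) in linarith)+

section \<open>The forced ascents\<close>

definition zeros :: "nat \<Rightarrow> bool list" where
  "zeros k = replicate (8 * k) False"

definition b_point :: "nat \<Rightarrow> bool list" where
  "b_point k = (case k of 0 \<Rightarrow> [] | Suc j \<Rightarrow> bits ''11111001'' @ zeros j)"

primrec ascent_path :: "bool \<Rightarrow> nat \<Rightarrow> bool list list" where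
  "ascent_path up 0 = [[]]"
| "ascent_path up (Suc k) =
     map (\<lambda>t. t @ zeros k) (top_before up)
     @ map ((@) (top_pivot1 up)) (ascent_path True k)
     @ map (\<lambda>t. t @ b_point k) (top_between up)
     @ map ((@) (top_pivot2 up)) (ascent_path False k)
     @ map (\<lambda>t. t @ zeros k) (top_after up)"

lemma length_zeros [simp]: "length (zeros k) = 8 * k"
  by (simp add: zeros_def)

lemma zeros_0: "zeros 0 = []"
  by (simp add: zeros_def)

lemma zeros_Suc: "zeros (Suc k) = bits ''00000000'' @ zeros k"
  by (simp add: zeros_def bits_def numeral_eq_Suc)

lemma length_b_point [simp]: "length (b_point k) = 8 * k"
  by (simp add: b_point_def bits_def split: nat.split)

lemma top_blocks_length:
  "\<forall>t\<in>set (top_before up). length t = 8" "length (top_pivot1 up) = 8"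
  "\<forall>t\<in>set (top_between up). length t = 8" "length (top_pivot2 up) = 8"
  "\<forall>t\<in>set (top_after up). length t = 8"
  by (simp_all add: top_before_def top_pivot1_def top_between_def top_pivot2_def top_after_def
      bits_def)

lemma top_blocks_ne: "top_before up \<noteq> []" "top_between up \<noteq> []" "top_after up \<noteq> []"
  by (simp_all add: top_before_def top_between_def top_after_def)

lemma ascent_path_ne [simp]: "ascent_path up k \<noteq> []"
  by (cases k) (simp_all add: top_before_def)

lemma hd_ascent_path: "hd (ascent_path up k) = (if up then zeros k else b_point k)"
  by (cases k) (simp_all add: top_before_def b_point_def zeros_Suc zeros_0)

lemma last_ascent_path: "last (ascent_path up k) = (if up then b_point k else zeros k)"
  by (cases k) (simp_all add: top_after_def b_point_def zeros_Suc zeros_0 last_map)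

lemma length_ascent_path: "length (ascent_path up k) + 9 = 10 * 2 ^ k"
proof (induction k arbitrary: up)
  case (Suc k)
  show ?case
    using Suc.IH[of True] Suc.IH[of False]
    by (simp add: top_before_def top_between_def top_after_def)
qed simp

lemma ascent_path_xB:
  "\<forall>x\<in>set (butlast (ascent_path up k)). x ! 7 = (\<not> up)"
proof (cases k)
  case (Suc j)
  then show ?thesis
    using top_blocks_length[of up]
    by (auto simp: butlast_append nth_append top_before_def top_pivot1_def top_between_def
        top_pivot2_def top_after_def bits_def)
qed simp

lemma s_par_M_par_bounds:
  assumes "Suc k \<le> n"
  shows "0 \<le> s_par n (Suc k)" "s_par n (Suc k) + 8 \<le> M_par n (Suc k)"
proof -
  have "8 * int n + 16 \<le> 2 ^ k * (8 * int n + 16)"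
    using mult_right_mono[of 1 "2 ^ k" "8 * int n + 16"] by simp
  moreover have "M_par n (Suc k) = 2 ^ k * (8 * int n + 16) - 16"
    and "s_par n (Suc k) = 8 * int n - 8 * int k - 8"
    by (simp_all add: M_par_def s_par_def)
  ultimately show "0 \<le> s_par n (Suc k)" "s_par n (Suc k) + 8 \<le> M_par n (Suc k)"
    using assms by linarith+
qed

lemma top_fit_over_zeros:
  "top_fit_over n k P Q (zeros k) = top_fit (M_par n (Suc k)) (s_par n (Suc k)) P Q 0 0 \<or>
   top_fit_over n k P Q (zeros k) =
     (\<lambda>t. top_fit (M_par n (Suc k)) (s_par n (Suc k)) P Q 0 (of_bool (t ! 5)) t)"
  by (simp add: top_fit_over_def zeros_def)

lemma top_fit_over_b_point:
  "top_fit_over n k P Q (b_point k) = top_fit (M_par n (Suc k)) (s_par n (Suc k)) P Q 1 1 \<or>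
   top_fit_over n k P Q (b_point k) =
     (\<lambda>t. top_fit (M_par n (Suc k)) (s_par n (Suc k)) P Q 0 (of_bool (t ! 5)) t)"
  by (simp add: top_fit_over_def b_point_def bits_def split: nat.split)

lemma local_peak_b_point_raise_xA:
  assumes "k \<le> n" "local_peak (8 * k) (tail_fit n k 1 0) (b_point k)"
  shows "local_peak (8 * k) (tail_fit n k 1 1) (b_point k)"
proof (cases k)
  case (Suc j)
  have raise: "tail_fit n k 1 1 y = tail_fit n k 1 0 y + s_par n (Suc j) * of_bool (y ! 7)" for y
    using Suc tail_fit_Suc_boundary[of n j 1 1 y] tail_fit_Suc_boundary[of n j 1 0 y] by simp
  have "0 \<le> s_par n (Suc j)" and "b_point k ! 7"
    using assms Suc by (simp_all add: s_par_def b_point_def bits_def)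
  then have bound:
    "s_par n (Suc j) * of_bool (y ! 7) \<le> s_par n (Suc j) * of_bool (b_point k ! 7)" for y
    by simp
  show ?thesis
    unfolding local_peak_iff_flip raise
  proof (intro conjI allI impI)
    fix i assume "i < 8 * k"
    with assms(2) have "tail_fit n k 1 0 (flip (b_point k) i) \<le> tail_fit n k 1 0 (b_point k)"
      by (simp add: local_peak_iff_flip)
    then show "tail_fit n k 1 0 (flip (b_point k) i)
        + s_par n (Suc j) * of_bool (flip (b_point k) i ! 7)
        \<le> tail_fit n k 1 0 (b_point k) + s_par n (Suc j) * of_bool (b_point k ! 7)"
      using bound by (rule add_mono)
  qed simp
qed (simp add: local_peak_iff_flip)

context
  fixes n k :: nat and up :: bool and P Q :: int
  assumes k_bound: "Suc k \<le> n"
    and boundary: "boundary_ok up P Q"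
    and ascent_up: "forced_ascent (8 * k) (tail_fit n k 1 0) (ascent_path True k)"
    and ascent_down:
      "\<And>Q. Q = 0 \<or> Q = 1 \<Longrightarrow> forced_ascent (8 * k) (tail_fit n k 0 Q) (ascent_path False k)"
begin

lemma tail_fit_local_peak_zeros:
  "Q' = 0 \<or> Q' = 1 \<Longrightarrow> local_peak (8 * k) (tail_fit n k 0 Q') (zeros k)"
  using ascent_down last_ascent_path[of False k] by (simp add: forced_ascent_def)

lemma tail_fit_local_peak_b_point:
  "Q' = 0 \<or> Q' = 1 \<Longrightarrow> local_peak (8 * k) (tail_fit n k 1 Q') (b_point k)"
  using ascent_up last_ascent_path[of True k] local_peak_b_point_raise_xA[of k n] k_bound
  by (auto simp: forced_ascent_def)

lemmas step_bounds = s_par_M_par_bounds[OF k_bound]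

lemma ascent_path_Suc_segment1:
  "successively (sole_ascent_step (8 * Suc k) (tail_fit n (Suc k) P Q))
     (map (\<lambda>t. t @ zeros k) (top_before up @ [top_pivot1 up]))"
  by (rule tail_fit_forced_path_top)
    (use top_walks_with_lower_zeros(1)[OF step_bounds boundary]
       top_blocks_length top_fit_over_zeros tail_fit_local_peak_zeros
     in \<open>auto simp: top_before_def bits_def\<close>)

lemma ascent_path_Suc_segment2:
  "successively (sole_ascent_step (8 * Suc k) (tail_fit n (Suc k) P Q))
     (map ((@) (top_pivot1 up)) (ascent_path True k))"
proof (rule tail_fit_forced_path_lower)
  show "successively
      (sole_ascent_step (8 * k)
        (tail_fit n k (of_bool (top_pivot1 up ! 5)) (of_bool (top_pivot1 up ! 6))))
      (ascent_path True k)"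
    using ascent_up by (simp add: forced_ascent_def top_pivot1_def bits_def)
  show "\<forall>x\<in>set (butlast (ascent_path True k)).
      local_peak 8 (top_fit_over n k P Q x) (top_pivot1 up)"
  proof (cases k)
    case (Suc j)
    then show ?thesis
      using ascent_path_xB[of True k] top_pivots_local_peak(1)[OF step_bounds boundary]
      by (auto simp: top_fit_over_def)
  qed simp
qed (simp add: top_pivot1_def bits_def)

lemma ascent_path_Suc_segment3:
  "successively (sole_ascent_step (8 * Suc k) (tail_fit n (Suc k) P Q))
     (map (\<lambda>t. t @ b_point k) (top_pivot1 up # top_between up @ [top_pivot2 up]))"
  by (rule tail_fit_forced_path_top)
    (use top_walk_with_lower_peak[OF step_bounds boundary]
       top_blocks_length top_fit_over_b_point tail_fit_local_peak_b_point
     in \<open>auto simp: top_pivot1_def top_between_def bits_def butlast_append\<close>)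

lemma ascent_path_Suc_segment4:
  "successively (sole_ascent_step (8 * Suc k) (tail_fit n (Suc k) P Q))
     (map ((@) (top_pivot2 up)) (ascent_path False k))"
proof (rule tail_fit_forced_path_lower)
  show "successively
      (sole_ascent_step (8 * k)
        (tail_fit n k (of_bool (top_pivot2 up ! 5)) (of_bool (top_pivot2 up ! 6))))
      (ascent_path False k)"
    using ascent_down[of 1] by (simp add: forced_ascent_def top_pivot2_def bits_def)
  show "\<forall>x\<in>set (butlast (ascent_path False k)).
      local_peak 8 (top_fit_over n k P Q x) (top_pivot2 up)"
  proof (cases k)
    case (Suc j)
    then show ?thesis
      using ascent_path_xB[of False k] top_pivots_local_peak(2)[OF step_bounds boundary]
      by (auto simp: top_fit_over_def)
  qed simp
qed (simp add: top_pivot2_def bits_def)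

lemma ascent_path_Suc_segment5:
  "successively (sole_ascent_step (8 * Suc k) (tail_fit n (Suc k) P Q))
     (map (\<lambda>t. t @ zeros k) (top_pivot2 up # top_after up))"
  by (rule tail_fit_forced_path_top)
    (use top_walks_with_lower_zeros(2)[OF step_bounds boundary]
       top_blocks_length top_fit_over_zeros tail_fit_local_peak_zeros
     in \<open>auto simp: top_pivot2_def top_after_def bits_def\<close>)

lemma ascent_path_Suc_last_local_peak:
  "local_peak (8 * Suc k) (tail_fit n (Suc k) P Q) (last (ascent_path up (Suc k)))"
proof -
  have "local_peak (8 * Suc k) (tail_fit n (Suc k) P Q) (last (top_after up) @ zeros k)"
    by (rule tail_fit_local_peak_Suc)
      (use top_walks_with_lower_zeros(3)[OF step_bounds boundary]
         top_fit_over_zeros tail_fit_local_peak_zeros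
       in \<open>auto simp: top_after_def bits_def\<close>)
  then show ?thesis
    by (simp add: last_map top_after_def)
qed

lemma forced_ascent_ascent_path_Suc:
  "forced_ascent (8 * Suc k) (tail_fit n (Suc k) P Q) (ascent_path up (Suc k))"
  using ascent_path_Suc_segment1 ascent_path_Suc_segment2 ascent_path_Suc_segment3
    ascent_path_Suc_segment4 ascent_path_Suc_segment5 ascent_path_Suc_last_local_peak
  by (simp add: forced_ascent_def successively_append_iff successively_Cons hd_map last_map
      hd_ascent_path last_ascent_path top_blocks_ne)

end

lemma forced_ascent_ascent_path:
  "k \<le> n \<Longrightarrow> boundary_ok up P Q \<Longrightarrow> forced_ascent (8 * k) (tail_fit n k P Q) (ascent_path up k)"
proof (induction k arbitrary: up P Q)
  case 0
  then show ?case
    by (simp add: forced_ascent_def local_peak_iff_flip)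
next
  case (Suc k)
  then show ?case
    by (intro forced_ascent_ascent_path_Suc) (simp_all add: boundary_ok_def)
qed

theorem theorem4p1:
  fixes n m :: nat
  assumes "n \<ge> 1" and "1 \<le> m" and "m \<le> n"
  defines "a \<equiv> replicate (8 * m) False"
      and "b \<equiv> [True, True, True, True, True, False, False, True] @ replicate (8 * (m - 1)) False"
  shows "(\<exists>!p. is_ascent (8 * m) (fitness n m 1) p \<and> hd p = a)
       \<and> (\<forall>p. is_ascent (8 * m) (fitness n m 1) p \<and> hd p = a \<longrightarrow>
              last p = b \<and> length p - 1 = 10 * (2 ^ m - 1))
       \<and> (\<exists>!p. is_ascent (8 * m) (fitness n m 0) p \<and> hd p = b)
       \<and> (\<forall>p. is_ascent (8 * m) (fitness n m 0) p \<and> hd p = b \<longrightarrow>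
              last p = a \<and> length p - 1 = 10 * (2 ^ m - 1))"
proof -
  have ends: "zeros m = a" "b_point m = b"
    using assms(2) by (auto simp: a_def b_def zeros_def b_point_def bits_def split: nat.split)
  have fit: "is_ascent (8 * m) (fitness n m P) p \<longleftrightarrow> is_ascent (8 * m) (tail_fit n m P 0) p" for P p
    using assms(2) by (intro is_ascent_cong) (simp add: fitness_eq_tail_fit)
  have "forced_ascent (8 * m) (tail_fit n m 1 0) (ascent_path True m)"
    and "forced_ascent (8 * m) (tail_fit n m 0 0) (ascent_path False m)"
    using assms(3) by (simp_all add: forced_ascent_ascent_path boundary_ok_def)
  from this[THEN forced_ascent_unique_iff]
  have "is_ascent (8 * m) (fitness n m 1) p \<and> hd p = a \<longleftrightarrow> p = ascent_path True m"
    and "is_ascent (8 * m) (fitness n m 0) p \<and> hd p = b \<longleftrightarrow> p = ascent_path False m" for p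
    by (simp_all add: fit hd_ascent_path ends)
  moreover have "length (ascent_path up m) - 1 = 10 * (2 ^ m - 1)" for up
    using length_ascent_path[of up m] by (simp add: diff_mult_distrib2)
  ultimately show ?thesis
    by (simp add: last_ascent_path ends)
qed

end
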